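(* (1) A field $F$ is $n$-torsion clean if and only if $F$ is finite and $n=|F|-1$. (2) A finite product of finite fields $\mathbb{F}_{p_1^{k_1}}\times\cdots\times\mathbb{F}_{p_t^{k_t}}$ is $n$-torsion clean, where $n=\mathrm{LCM}(p_1^{k_1}-1,\ldots,p_t^{k_t}-1)$. (3) A product $\prod_{i\in I}F_i$ of fields is $n$-torsion clean if and only if all fields $F_i$, $i\in I$, are finite and $\mathrm{LCM}(|F_i|-1\mid i\in I)$ exists and equals $n$. (4) Let $R$ be a subdirect product of fields $F_i$, $i\in I$. Then $R$ is $n$-torsion clean if and only if $\prod_{i\in I}F_i$ is $n$-torsion clean.
   Context: All rings are associative with identity; $\mathbb{F}_m$ denotes the field with $m$ elements. A ring $R$ is $n$-torsion clean if every $r\in R$ can be written $r=e+u$ with $e^2=e$, $u$ a unit, $u^n=1$, and $n$ is the smallest natural number with this property. $\mathrm{LCM}(|F_i|-1\mid i\in I)$ exists means the set $\{|F_i|-1\mid i\in I\}$ has a least common multiple in $\mathbb{N}$. *)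

theory Defs
  imports "HOL-Algebra.Ring"
begin

definition torsion_clean_with :: "('a, 'b) ring_scheme \<Rightarrow> nat \<Rightarrow> bool" where
  "torsion_clean_with R n \<longleftrightarrow>
     (\<forall>r \<in> carrier R. \<exists>e u. e \<in> carrier R \<and> e \<otimes>\<^bsub>R\<^esub> e = e \<and>
        u \<in> Units R \<and> u [^]\<^bsub>R\<^esub> n = \<one>\<^bsub>R\<^esub> \<and> r = e \<oplus>\<^bsub>R\<^esub> u)"

definition n_torsion_clean :: "('a, 'b) ring_scheme \<Rightarrow> nat \<Rightarrow> bool" where
  "n_torsion_clean R n \<longleftrightarrow> 1 \<le> n \<and> torsion_clean_with R n \<and>
     (\<forall>m. 1 \<le> m \<and> m < n \<longrightarrow> \<not> torsion_clean_with R m)"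

definition prod_ring :: "'i set \<Rightarrow> ('i \<Rightarrow> ('a, 'b) ring_scheme) \<Rightarrow> ('i \<Rightarrow> 'a) ring" where
  "prod_ring I F =
     \<lparr> carrier = (\<Pi>\<^sub>E i\<in>I. carrier (F i)),
       monoid.mult = (\<lambda>x y. \<lambda>i\<in>I. x i \<otimes>\<^bsub>F i\<^esub> y i),
       one = (\<lambda>i\<in>I. \<one>\<^bsub>F i\<^esub>),
       zero = (\<lambda>i\<in>I. \<zero>\<^bsub>F i\<^esub>),
       add = (\<lambda>x y. \<lambda>i\<in>I. x i \<oplus>\<^bsub>F i\<^esub> y i) \<rparr>"

definition is_LCM :: "nat set \<Rightarrow> nat \<Rightarrow> bool" where
  "is_LCM S n \<longleftrightarrow> 0 < n \<and> (\<forall>s \<in> S. s dvd n) \<and>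
     (\<forall>m. 0 < m \<and> (\<forall>s \<in> S. s dvd m) \<longrightarrow> n \<le> m)"

definition subdirect_product :: "('c, 'd) ring_scheme \<Rightarrow> 'i set \<Rightarrow> ('i \<Rightarrow> ('a, 'b) ring_scheme)
    \<Rightarrow> ('c \<Rightarrow> 'i \<Rightarrow> 'a) \<Rightarrow> bool" where
  "subdirect_product R I F h \<longleftrightarrow>
     h \<in> ring_hom R (prod_ring I F) \<and> inj_on h (carrier R) \<and>
     (\<forall>i \<in> I. (\<lambda>r. h r i) ` carrier R = carrier (F i))"

end

theory Submission
  imports Defs "HOL-Algebra.Multiplicative_Group" "HOL-Algebra.Polynomial_Divisibility"
begin

text \<open>
  In a field the only idempotents are \<open>\<zero>\<close> and \<open>\<one>\<close>, so every element is an idempotent plus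
  a unit \<open>u\<close> with \<open>u\<^sup>m = \<one>\<close> exactly when the field is covered by the group \<open>H\<close> of \<open>m\<close>-th
  roots of unity and its translate \<open>H \<oplus> \<one>\<close>. This forces the field to be finite of order \<open>q \<le> 2 |H|\<close>, and since
  \<open>|H| \<le> gcd m (q - 1)\<close> we get \<open>(q - 1) dvd m\<close>; conversely, if \<open>(q - 1) dvd m\<close> then
  \<open>x = (\<one> \<ominus> x\<^sup>m) \<oplus> (x \<ominus> (\<one> \<ominus> x\<^sup>m))\<close> is a valid decomposition. The same decomposition
  works in any subdirect product of fields, checked coordinatewise, while the converse passes to
  each factor along the surjective projections. Hence in all cases the admissible exponents are
  the common multiples of the numbers \<open>|F\<^sub>i| - 1\<close>, and the least one is their LCM.
\<close>

lemma dvd_if_less_twice_gcd: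
  fixes k m :: nat
  assumes "0 < k" "k < 2 * gcd m k"
  shows "k dvd m"
proof -
  obtain j where j: "k = gcd m k * j" by (meson gcd_dvd2 dvdE)
  with assms(2) have "gcd m k * j < gcd m k * 2" by (simp add: mult.commute)
  then have "j < 2" by simp
  moreover have "j \<noteq> 0" using j assms(1) by (metis less_irrefl mult_0_right)
  ultimately have "j = 1" by linarith
  with j show ?thesis by (metis gcd_dvd1 mult_1_right)
qed

lemma is_LCM_singleton: "0 < k \<Longrightarrow> is_LCM {k} n \<longleftrightarrow> n = k"
  unfolding is_LCM_def by (auto intro: dvd_imp_le order.antisym)

lemma is_LCM_Lcm:
  fixes S :: "nat set"
  assumes "finite S" "0 \<notin> S"
  shows "is_LCM S (Lcm S)"
proof -
  have "Lcm S \<noteq> 0" using assms by (simp add: Lcm_0_iff)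
  then show ?thesis unfolding is_LCM_def by (auto intro: dvd_imp_le Lcm_least)
qed

lemma (in domain) two_le_card_carrier: "finite (carrier R) \<Longrightarrow> 2 \<le> card (carrier R)"
  using card_mono[of "carrier R" "{\<zero>, \<one>}"] by simp

subsection \<open>Fields\<close>

lemma (in field) idempotent_eq_zero_or_one:
  assumes "e \<in> carrier R" "e \<otimes> e = e"
  shows "e = \<zero> \<or> e = \<one>"
proof -
  have "e = \<one>" if "e \<noteq> \<zero>"
  proof -
    have "inv e \<otimes> (e \<otimes> e) = inv e \<otimes> e" using assms by simp
    with that assms(1) show ?thesis
      by (metis DiffI Units_inv_closed Units_l_inv field_Units l_one m_assoc singletonD)
  qed
  then show ?thesis by blast
qed

lemma (in field) finite_roots_of_unity:
  assumes "0 < m"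
  shows "finite {x \<in> carrier R. x [^] (m::nat) = \<one>}"
proof -
  define p where "p = monom \<one> (m - 1) @ [\<ominus> \<one>]" \<comment> \<open>the coefficient list of \<open>X\<^sup>m - 1\<close>\<close>
  have p: "p \<in> carrier (poly_ring R)"
    unfolding p_def sym[OF univ_poly_carrier] polynomial_def monom_def by auto
  have "eval p x = x [^] m \<ominus> \<one>" if "x \<in> carrier R" for x
  proof -
    have "eval p x = x [^] (m - 1) \<otimes> x \<oplus> \<ominus> \<one>"
      unfolding p_def using eval_append_aux[OF monom_in_carrier[of \<one> "m - 1"] _ that]
        eval_monom[OF one_closed that] that by simp
    also have "\<dots> = x [^] m \<ominus> \<one>"
      using assms by (simp add: minus_eq flip: nat_pow_Suc)
    finally show ?thesis .
  qed
  then have "{x \<in> carrier R. x [^] m = \<one>} \<subseteq> {x. is_root p x}"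
    unfolding is_root_def by (auto simp: p_def)
  then show ?thesis using finite_number_of_roots[OF p] finite_subset by blast
qed

lemma (in field) pow_card_minus_one:
  assumes "finite (carrier R)" "x \<in> carrier R" "x \<noteq> \<zero>"
  shows "x [^] (card (carrier R) - 1) = \<one>"
proof -
  interpret G: group "Multiplicative_Group.mult_of R" by (rule field_mult_group)
  have "x [^]\<^bsub>Multiplicative_Group.mult_of R\<^esub> order (Multiplicative_Group.mult_of R) =
      \<one>\<^bsub>Multiplicative_Group.mult_of R\<^esub>"
    using assms by (intro G.pow_order_eq_1) simp
  then show ?thesis
    using order_mult_of[OF assms(1)] by (simp add: Multiplicative_Group.nat_pow_mult_of order_def)
qed

lemma (in field) pow_multiple_of_card_minus_one:
  assumes "finite (carrier R)" "(card (carrier R) - 1) dvd m" "0 < m" "x \<in> carrier R"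
  shows "x [^] m = (if x = \<zero> then \<zero> else \<one>)"
proof (cases "x = \<zero>")
  case False
  obtain k where "m = (card (carrier R) - 1) * k" using assms(2) by blast
  then show ?thesis
    using False assms pow_card_minus_one[OF assms(1,4)] by (simp add: nat_pow_pow[symmetric])
qed (use assms(3) in \<open>simp add: nat_pow_zero\<close>)

lemma (in field) card_roots_of_unity_le_gcd:
  assumes "finite (carrier R)" "0 < m"
  shows "card {x \<in> carrier R. x [^] (m::nat) = \<one>} \<le> gcd m (card (carrier R) - 1)"
proof -
  interpret G: group "Multiplicative_Group.mult_of R" by (rule field_mult_group)
  let ?d = "gcd m (card (carrier R) - 1)"
  have "x [^] ?d = \<one>" if "x \<in> carrier R" "x [^] m = \<one>" for x
  proof -
    have "x \<noteq> \<zero>" using that assms(2) by (metis nat_pow_zero not_gr0 zero_not_one)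
    then have x: "x \<in> carrier (Multiplicative_Group.mult_of R)" using that(1) by simp
    have "G.ord x dvd m" "G.ord x dvd card (carrier R) - 1"
      using that \<open>x \<noteq> \<zero>\<close> pow_card_minus_one[OF assms(1) that(1)]
      by (simp_all add: G.pow_eq_id[OF x, symmetric] Multiplicative_Group.nat_pow_mult_of)
    then show ?thesis using G.pow_eq_id[OF x] by (simp add: Multiplicative_Group.nat_pow_mult_of)
  qed
  then have "card {x \<in> carrier R. x [^] m = \<one>} \<le> card {x \<in> carrier R. x [^] ?d = \<one>}"
    using assms(1) by (intro card_mono) auto
  also have "\<dots> \<le> ?d" using assms by (intro num_roots_le_deg) auto
  finally show ?thesis .
qed

lemma (in field) carrier_subset_roots_of_unity_shift:
  assumes "torsion_clean_with R m"
  shows "carrier R \<subseteq> {x \<in> carrier R. x [^] m = \<one>} \<union> (\<lambda>x. x \<oplus> \<one>) ` {x \<in> carrier R. x [^] m = \<one>}"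
proof
  fix r assume "r \<in> carrier R"
  then obtain e u where eu: "e \<in> carrier R" "e \<otimes> e = e" "u \<in> Units R" "u [^] m = \<one>" "r = e \<oplus> u"
    using assms unfolding torsion_clean_with_def by blast
  then have "u \<in> carrier R" by blast
  with eu idempotent_eq_zero_or_one[OF eu(1,2)]
  show "r \<in> {x \<in> carrier R. x [^] m = \<one>} \<union> (\<lambda>x. x \<oplus> \<one>) ` {x \<in> carrier R. x [^] m = \<one>}"
    by (auto simp: add.m_comm)
qed

lemma (in field) finite_and_card_minus_one_dvd_if_torsion_clean:
  assumes "0 < m" "torsion_clean_with R m"
  shows "finite (carrier R) \<and> (card (carrier R) - 1) dvd m"
proof -
  define H where "H = {x \<in> carrier R. x [^] m = \<one>}"
  have cover: "carrier R \<subseteq> H \<union> (\<lambda>x. x \<oplus> \<one>) ` H"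
    unfolding H_def by (rule carrier_subset_roots_of_unity_shift[OF assms(2)])
  have "finite H" unfolding H_def by (rule finite_roots_of_unity[OF assms(1)])
  then have fin: "finite (carrier R)" using cover finite_subset by blast
  have "card (carrier R) \<le> card (H \<union> (\<lambda>x. x \<oplus> \<one>) ` H)"
    using cover \<open>finite H\<close> by (intro card_mono) auto
  also have "\<dots> \<le> 2 * card H"
    using card_Un_le[of H "(\<lambda>x. x \<oplus> \<one>) ` H"] card_image_le[OF \<open>finite H\<close>, of "\<lambda>x. x \<oplus> \<one>"]
    by linarith
  also have "\<dots> \<le> 2 * gcd m (card (carrier R) - 1)"
    unfolding H_def using card_roots_of_unity_le_gcd[OF fin assms(1)] by simp
  finally have "card (carrier R) - 1 < 2 * gcd m (card (carrier R) - 1)"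
    using two_le_card_carrier[OF fin] by linarith
  then show ?thesis using fin two_le_card_carrier[OF fin] by (simp add: dvd_if_less_twice_gcd)
qed

lemma (in field) one_minus_pow_idempotent:
  assumes "finite (carrier R)" "(card (carrier R) - 1) dvd m" "0 < m" "x \<in> carrier R"
  shows "(\<one> \<ominus> x [^] m) \<otimes> (\<one> \<ominus> x [^] m) = \<one> \<ominus> x [^] m"
  using pow_multiple_of_card_minus_one[OF assms] by (simp add: minus_eq r_neg)

lemma (in field) pow_minus_one_minus_pow:
  assumes "finite (carrier R)" "(card (carrier R) - 1) dvd m" "0 < m" "x \<in> carrier R"
  shows "(x \<ominus> (\<one> \<ominus> x [^] m)) [^] m = \<one>"
proof (cases "x = \<zero>")
  case True
  have "\<ominus> \<one> \<noteq> \<zero>" by (metis add.inv_eq_1_iff one_closed zero_not_one)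
  then show ?thesis
    using True pow_multiple_of_card_minus_one[OF assms(1-3), of "\<ominus> \<one>"]
      pow_multiple_of_card_minus_one[OF assms] by (simp add: minus_eq)
next
  case False
  then show ?thesis
    using pow_multiple_of_card_minus_one[OF assms] assms(4) by (simp add: minus_eq r_neg)
qed

lemma (in ring) torsion_clean_withI:
  assumes "0 < m"
    and "\<And>x. x \<in> carrier R \<Longrightarrow>
      (\<one> \<ominus> x [^] m) \<otimes> (\<one> \<ominus> x [^] m) = \<one> \<ominus> x [^] m \<and> (x \<ominus> (\<one> \<ominus> x [^] m)) [^] m = \<one>"
  shows "torsion_clean_with R m"
  unfolding torsion_clean_with_def
proof
  fix x assume x: "x \<in> carrier R"
  define e where "e = \<one> \<ominus> x [^] m"
  define u where "u = x \<ominus> e"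
  have e: "e \<in> carrier R" and u: "u \<in> carrier R" unfolding e_def u_def using x by simp_all
  have "e \<otimes> e = e" "u [^] m = \<one>" using assms(2)[OF x] unfolding e_def u_def by simp_all
  moreover have "u \<in> Units R"
  proof -
    obtain k where "m = Suc k" using assms(1) gr0_implies_Suc by blast
    then have "u [^] k \<otimes> u = \<one>" "u \<otimes> u [^] k = \<one>"
      using \<open>u [^] m = \<one>\<close> u by (simp_all add: nat_pow_Suc2[symmetric])
    then show ?thesis unfolding Units_def using u by auto
  qed
  moreover have "x = e \<oplus> u"
    unfolding u_def using x e by (simp add: minus_eq add.m_lcomm[of e x] r_neg)
  ultimately show "\<exists>e u. e \<in> carrier R \<and> e \<otimes> e = e \<and> u \<in> Units R \<and> u [^] m = \<one> \<and> x = e \<oplus> u"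
    using e by blast
qed

lemma (in field) torsion_clean_with_iff:
  assumes "0 < m"
  shows "torsion_clean_with R m \<longleftrightarrow> finite (carrier R) \<and> (card (carrier R) - 1) dvd m"
  using finite_and_card_minus_one_dvd_if_torsion_clean[OF assms]
    torsion_clean_withI[OF assms] one_minus_pow_idempotent pow_minus_one_minus_pow assms
  by blast

subsection \<open>Homomorphic images, products and subdirect products\<close>

lemma torsion_clean_with_hom_image:
  assumes "ring R" "ring S" "h \<in> ring_hom R S" "h ` carrier R = carrier S"
    and "torsion_clean_with R m"
  shows "torsion_clean_with S m"
  unfolding torsion_clean_with_def
proof
  interpret ring_hom_ring R S h using assms(1-3) by (rule ring_hom_ringI2)
  fix s assume "s \<in> carrier S"
  then obtain r where r: "r \<in> carrier R" "s = h r" using assms(4) by blast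
  then obtain e u where eu: "e \<in> carrier R" "e \<otimes>\<^bsub>R\<^esub> e = e" "u \<in> Units R"
    "u [^]\<^bsub>R\<^esub> m = \<one>\<^bsub>R\<^esub>" "r = e \<oplus>\<^bsub>R\<^esub> u"
    using assms(5) unfolding torsion_clean_with_def by blast
  have u: "u \<in> carrier R" using eu(3) by (rule R.Units_closed)
  have unit: "h u \<in> Units S"
  proof -
    obtain v where v: "v \<in> carrier R" "v \<otimes>\<^bsub>R\<^esub> u = \<one>\<^bsub>R\<^esub>" "u \<otimes>\<^bsub>R\<^esub> v = \<one>\<^bsub>R\<^esub>"
      using eu(3) unfolding Units_def by blast
    have "h v \<otimes>\<^bsub>S\<^esub> h u = \<one>\<^bsub>S\<^esub>" "h u \<otimes>\<^bsub>S\<^esub> h v = \<one>\<^bsub>S\<^esub>"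
      using v u by (metis hom_mult hom_one)+
    then show ?thesis unfolding Units_def using u v(1) by auto
  qed
  have idem: "h e \<otimes>\<^bsub>S\<^esub> h e = h e" using eu(1,2) by (metis hom_mult)
  have root: "h u [^]\<^bsub>S\<^esub> m = \<one>\<^bsub>S\<^esub>" using u eu(4) by (metis hom_nat_pow hom_one)
  have sum: "s = h e \<oplus>\<^bsub>S\<^esub> h u" unfolding r(2) eu(5) using eu(1) u by (rule hom_add)
  show "\<exists>e u. e \<in> carrier S \<and> e \<otimes>\<^bsub>S\<^esub> e = e \<and> u \<in> Units S \<and>
      u [^]\<^bsub>S\<^esub> m = \<one>\<^bsub>S\<^esub> \<and> s = e \<oplus>\<^bsub>S\<^esub> u"
    by (rule exI[of _ "h e"], rule exI[of _ "h u"]) (simp add: eu(1) idem unit root sum)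
qed

lemma prod_ring_simps:
  "carrier (prod_ring I F) = (\<Pi>\<^sub>E i\<in>I. carrier (F i))"
  "x \<otimes>\<^bsub>prod_ring I F\<^esub> y = (\<lambda>i\<in>I. x i \<otimes>\<^bsub>F i\<^esub> y i)"
  "x \<oplus>\<^bsub>prod_ring I F\<^esub> y = (\<lambda>i\<in>I. x i \<oplus>\<^bsub>F i\<^esub> y i)"
  "\<one>\<^bsub>prod_ring I F\<^esub> = (\<lambda>i\<in>I. \<one>\<^bsub>F i\<^esub>)"
  "\<zero>\<^bsub>prod_ring I F\<^esub> = (\<lambda>i\<in>I. \<zero>\<^bsub>F i\<^esub>)"
  by (simp_all add: prod_ring_def)

lemma ring_prod_ring:
  assumes "\<And>i. i \<in> I \<Longrightarrow> ring (F i)"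
  shows "ring (prod_ring I F)"
proof (rule ringI)
  show "abelian_group (prod_ring I F)"
  proof (rule abelian_groupI)
    fix x assume "x \<in> carrier (prod_ring I F)"
    then show "\<exists>y \<in> carrier (prod_ring I F). y \<oplus>\<^bsub>prod_ring I F\<^esub> x = \<zero>\<^bsub>prod_ring I F\<^esub>"
      by (intro bexI[of _ "\<lambda>i\<in>I. \<ominus>\<^bsub>F i\<^esub> x i"])
        (auto simp: prod_ring_simps PiE_iff assms ring.ring_simprules
          abelian_group.l_neg[OF ring.is_abelian_group])
  qed (auto simp: prod_ring_simps PiE_iff extensional_def fun_eq_iff assms ring.ring_simprules)
next
  show "monoid (prod_ring I F)"
    by (rule monoidI)
      (auto simp: prod_ring_simps PiE_iff extensional_def fun_eq_iff assms ring.ring_simprules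
        monoid.r_one[OF ring.is_monoid])
qed (auto simp: prod_ring_simps PiE_iff fun_eq_iff assms ring.ring_simprules)

lemma ring_hom_prod_ring_projection:
  "i \<in> I \<Longrightarrow> (\<lambda>x. x i) \<in> ring_hom (prod_ring I F) (F i)"
  by (rule ring_hom_memI) (auto simp: prod_ring_simps)

lemma subdirect_product_prod_ring:
  assumes "\<And>i. i \<in> I \<Longrightarrow> ring (F i)"
  shows "subdirect_product (prod_ring I F) I F id"
proof -
  have "(\<Pi>\<^sub>E i\<in>I. carrier (F i)) \<noteq> {}"
    using assms ring.ring_simprules(2) by (fastforce simp: PiE_eq_empty_iff)
  then show ?thesis
    unfolding subdirect_product_def by (simp add: prod_ring_simps image_projection_PiE)
qed

lemma subdirect_product_component_hom:
  assumes "subdirect_product R I F h" "i \<in> I"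
  shows "(\<lambda>r. h r i) \<in> ring_hom R (F i)"
proof -
  have "h \<in> ring_hom R (prod_ring I F)" using assms(1) unfolding subdirect_product_def by blast
  from ring_hom_trans[OF this ring_hom_prod_ring_projection[OF assms(2)]] show ?thesis
    by (simp add: comp_def)
qed

lemma subdirect_product_eqI:
  assumes "subdirect_product R I F h" "x \<in> carrier R" "y \<in> carrier R"
    and "\<And>i. i \<in> I \<Longrightarrow> h x i = h y i"
  shows "x = y"
proof -
  have hom: "h \<in> ring_hom R (prod_ring I F)" and inj: "inj_on h (carrier R)"
    using assms(1) unfolding subdirect_product_def by blast+
  have "h x \<in> carrier (prod_ring I F)" "h y \<in> carrier (prod_ring I F)"
    using ring_hom_closed[OF hom] assms(2,3) by blast+
  then have "h x = h y" using assms(4) unfolding prod_ring_simps by (rule PiE_ext)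
  with inj show ?thesis using assms(2,3) by (rule inj_onD)
qed

lemma (in ring) torsion_clean_with_subdirect_product_iff:
  assumes fields: "\<forall>i\<in>I. field (F i)" and subdirect: "subdirect_product R I F h" and "0 < m"
  shows "torsion_clean_with R m \<longleftrightarrow>
    (\<forall>i\<in>I. finite (carrier (F i))) \<and> (\<forall>s \<in> (\<lambda>i. card (carrier (F i)) - 1) ` I. s dvd m)"
proof -
  have component: "ring_hom_ring R (F i) (\<lambda>r. h r i)" if "i \<in> I" for i
    using ring_axioms field.is_ring[of "F i"] subdirect_product_component_hom[OF subdirect that]
      fields that by (blast intro: ring_hom_ringI2)
  have "torsion_clean_with R m \<longleftrightarrow> (\<forall>i\<in>I. torsion_clean_with (F i) m)"
  proof
    assume tc: "torsion_clean_with R m"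
    show "\<forall>i\<in>I. torsion_clean_with (F i) m"
    proof
      fix i assume i: "i \<in> I"
      interpret H: ring_hom_ring R "F i" "\<lambda>r. h r i" using component[OF i] .
      have "(\<lambda>r. h r i) ` carrier R = carrier (F i)"
        using subdirect i unfolding subdirect_product_def by blast
      with tc show "torsion_clean_with (F i) m"
        using torsion_clean_with_hom_image[OF ring_axioms H.S.ring_axioms H.homh] by blast
    qed
  next
    assume components: "\<forall>i\<in>I. torsion_clean_with (F i) m"
    show "torsion_clean_with R m"
    proof (rule torsion_clean_withI[OF \<open>0 < m\<close>])
      fix x assume x: "x \<in> carrier R"
      let ?e = "\<one> \<ominus> x [^] m"
      have "h (?e \<otimes> ?e) i = h ?e i \<and> h ((x \<ominus> ?e) [^] m) i = h \<one> i" if i: "i \<in> I" for i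
      proof -
        interpret F: field "F i" using fields i by simp
        interpret H: ring_hom_ring R "F i" "\<lambda>r. h r i" using component[OF i] .
        have "finite (carrier (F i)) \<and> (card (carrier (F i)) - 1) dvd m"
          using F.torsion_clean_with_iff[OF \<open>0 < m\<close>] components i by blast
        then show ?thesis
          using F.one_minus_pow_idempotent F.pow_minus_one_minus_pow \<open>0 < m\<close> x
          by (simp add: minus_eq F.minus_eq H.hom_nat_pow)
      qed
      then show "?e \<otimes> ?e = ?e \<and> (x \<ominus> ?e) [^] m = \<one>"
        using x by (auto intro: subdirect_product_eqI[OF subdirect])
    qed
  qed
  also have "\<dots> \<longleftrightarrow> (\<forall>i\<in>I. finite (carrier (F i)) \<and> (card (carrier (F i)) - 1) dvd m)"
    using fields \<open>0 < m\<close> field.torsion_clean_with_iff by blast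
  finally show ?thesis by blast
qed

subsection \<open>The least exponent\<close>

lemma n_torsion_clean_iff_is_LCM:
  assumes "\<And>m. 0 < m \<Longrightarrow> torsion_clean_with R m \<longleftrightarrow> P \<and> (\<forall>s\<in>S. s dvd m)"
  shows "n_torsion_clean R n \<longleftrightarrow> P \<and> is_LCM S n"
  unfolding n_torsion_clean_def is_LCM_def using assms by (auto simp: Suc_le_eq not_less)

lemma field_n_torsion_clean_iff:
  assumes "field F"
  shows "n_torsion_clean F n \<longleftrightarrow> finite (carrier F) \<and> n = card (carrier F) - 1"
proof -
  have "n_torsion_clean F n \<longleftrightarrow> finite (carrier F) \<and> is_LCM {card (carrier F) - 1} n"
    using field.torsion_clean_with_iff[OF assms] by (intro n_torsion_clean_iff_is_LCM) simp
  also have "\<dots> \<longleftrightarrow> finite (carrier F) \<and> n = card (carrier F) - 1"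
    using is_LCM_singleton domain.two_le_card_carrier[OF field.axioms(1)[OF assms]]
    by (metis Suc_1 Suc_le_eq zero_less_diff)
  finally show ?thesis .
qed

lemma subdirect_product_n_torsion_clean_iff:
  assumes "ring R" "\<forall>i\<in>I. field (F i)" "subdirect_product R I F h"
  shows "n_torsion_clean R n \<longleftrightarrow>
    (\<forall>i\<in>I. finite (carrier (F i))) \<and> is_LCM ((\<lambda>i. card (carrier (F i)) - 1) ` I) n"
  using ring.torsion_clean_with_subdirect_product_iff[OF assms] by (rule n_torsion_clean_iff_is_LCM)

lemma prod_ring_n_torsion_clean_iff:
  assumes "\<forall>i\<in>I. field (F i)"
  shows "n_torsion_clean (prod_ring I F) n \<longleftrightarrow>
    (\<forall>i\<in>I. finite (carrier (F i))) \<and> is_LCM ((\<lambda>i. card (carrier (F i)) - 1) ` I) n"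
proof -
  have rings: "\<And>i. i \<in> I \<Longrightarrow> ring (F i)" using assms field.is_ring by blast
  show ?thesis
    by (rule subdirect_product_n_torsion_clean_iff[OF ring_prod_ring[OF rings] assms
          subdirect_product_prod_ring[OF rings]])
qed

lemma prod_ring_n_torsion_clean_Lcm:
  assumes "finite I" "\<forall>i\<in>I. field (F i) \<and> finite (carrier (F i))"
  shows "n_torsion_clean (prod_ring I F) (Lcm ((\<lambda>i. card (carrier (F i)) - 1) ` I))"
proof -
  have "0 \<notin> (\<lambda>i. card (carrier (F i)) - 1) ` I"
    using assms(2) domain.two_le_card_carrier[OF field.axioms(1)] by fastforce
  then show ?thesis
    using assms by (simp add: prod_ring_n_torsion_clean_iff is_LCM_Lcm)
qed

theorem proposition2p8:
  shows
   "(\<forall>(F :: ('a, 'b) ring_scheme) n. field F \<longrightarrow>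
       (n_torsion_clean F n \<longleftrightarrow> finite (carrier F) \<and> n = card (carrier F) - 1))
  \<and> (\<forall>(I :: 'i set) (F :: 'i \<Rightarrow> ('c, 'd) ring_scheme) n.
       finite I \<and> (\<forall>i \<in> I. field (F i) \<and> finite (carrier (F i))) \<and>
       n = Lcm ((\<lambda>i. card (carrier (F i)) - 1) ` I) \<longrightarrow>
       n_torsion_clean (prod_ring I F) n)
  \<and> (\<forall>(I :: 'j set) (F :: 'j \<Rightarrow> ('e, 'f) ring_scheme) n.
       (\<forall>i \<in> I. field (F i)) \<longrightarrow>
       (n_torsion_clean (prod_ring I F) n \<longleftrightarrow>
          (\<forall>i \<in> I. finite (carrier (F i))) \<and> is_LCM ((\<lambda>i. card (carrier (F i)) - 1) ` I) n))
  \<and> (\<forall>(R :: ('g, 'h) ring_scheme) (I :: 'k set) (F :: 'k \<Rightarrow> ('l, 'm) ring_scheme) h n.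
       ring R \<and> (\<forall>i \<in> I. field (F i)) \<and> subdirect_product R I F h \<longrightarrow>
       (n_torsion_clean R n \<longleftrightarrow> n_torsion_clean (prod_ring I F) n))"
  apply (intro conjI allI impI)
  subgoal by (rule field_n_torsion_clean_iff)
  subgoal by (metis prod_ring_n_torsion_clean_Lcm)
  subgoal by (rule prod_ring_n_torsion_clean_iff)
  subgoal by (auto simp: subdirect_product_n_torsion_clean_iff prod_ring_n_torsion_clean_iff)
  done

end
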